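(* Let $M$ be a connected matroid whose ground set is $D_1\cup D_2\cup\{e\}$, where $e\notin D_1\cup D_2$ and $D_1,D_2$ are skew circuits of $M$. Then either $M$ has a $2$-element cocircuit avoiding $e$, or $M\cong S((U_{k-2,k};e),(U_{l-2,l};e))$ for some integers $k\ge3$ and $l\ge 3$.
   Context: Two sets $X,Y$ in a matroid with rank function $r$ are skew if $r(X)+r(Y)=r(X\cup Y)$. $U_{r,n}$ is the uniform matroid of rank $r$ on $n$ elements. Series connection: if $M_1,M_2$ are matroids with $E(M_1)\cap E(M_2)=\{p\}$ and $p$ is neither a loop nor a coloop of either, then $S((M_1;p),(M_2;p))$ is the matroid on $E(M_1)\cup E(M_2)$ whose circuits are the circuits of $M_1$ avoiding $p$, the circuits of $M_2$ avoiding $p$, and all sets $C_1\cup C_2$ where $C_i$ is a circuit of $M_i$ containing $p$ for $i=1,2$. *)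

theory Defs
  imports Main
begin

type_synonym 'a matroid = "'a set \<times> ('a set \<Rightarrow> bool)"

definition ground :: "'a matroid \<Rightarrow> 'a set" where
  "ground M = fst M"

definition indep :: "'a matroid \<Rightarrow> 'a set \<Rightarrow> bool" where
  "indep M I \<longleftrightarrow> I \<subseteq> ground M \<and> snd M I"

definition is_matroid :: "'a matroid \<Rightarrow> bool" where
  "is_matroid M \<longleftrightarrow>
     finite (ground M) \<and>
     indep M {} \<and>
     (\<forall>I J. indep M J \<and> I \<subseteq> J \<longrightarrow> indep M I) \<and>
     (\<forall>I J. indep M I \<and> indep M J \<and> card I < card J \<longrightarrow>
        (\<exists>x \<in> J - I. indep M (insert x I)))"

definition rank :: "'a matroid \<Rightarrow> 'a set \<Rightarrow> nat" where
  "rank M X = Max (card ` {I. I \<subseteq> X \<and> indep M I})"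

definition skew :: "'a matroid \<Rightarrow> 'a set \<Rightarrow> 'a set \<Rightarrow> bool" where
  "skew M X Y \<longleftrightarrow> rank M X + rank M Y = rank M (X \<union> Y)"

definition circuit :: "'a matroid \<Rightarrow> 'a set \<Rightarrow> bool" where
  "circuit M C \<longleftrightarrow> C \<subseteq> ground M \<and> \<not> indep M C \<and>
     (\<forall>x \<in> C. indep M (C - {x}))"

definition basis :: "'a matroid \<Rightarrow> 'a set \<Rightarrow> bool" where
  "basis M B \<longleftrightarrow> indep M B \<and> (\<forall>x \<in> ground M - B. \<not> indep M (insert x B))"

definition dual :: "'a matroid \<Rightarrow> 'a matroid" where
  "dual M = (ground M, \<lambda>I. I \<subseteq> ground M \<and> (\<exists>B. basis M B \<and> I \<inter> B = {}))"

definition cocircuit :: "'a matroid \<Rightarrow> 'a set \<Rightarrow> bool" where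
  "cocircuit M C \<longleftrightarrow> circuit (dual M) C"

definition connected_matroid :: "'a matroid \<Rightarrow> bool" where
  "connected_matroid M \<longleftrightarrow>
     (\<forall>x \<in> ground M. \<forall>y \<in> ground M. x \<noteq> y \<longrightarrow>
        (\<exists>C. circuit M C \<and> x \<in> C \<and> y \<in> C))"

definition uniform :: "nat \<Rightarrow> 'a set \<Rightarrow> 'a matroid" where
  "uniform r E = (E, \<lambda>I. I \<subseteq> E \<and> card I \<le> r)"

definition series_circuits :: "'a matroid \<Rightarrow> 'a matroid \<Rightarrow> 'a \<Rightarrow> 'a set set" where
  "series_circuits M1 M2 p =
     {C. circuit M1 C \<and> p \<notin> C} \<union> {C. circuit M2 C \<and> p \<notin> C} \<union>
     {C1 \<union> C2 | C1 C2. circuit M1 C1 \<and> p \<in> C1 \<and> circuit M2 C2 \<and> p \<in> C2}"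

definition series :: "'a matroid \<Rightarrow> 'a matroid \<Rightarrow> 'a \<Rightarrow> 'a matroid" where
  "series M1 M2 p = (ground M1 \<union> ground M2,
     \<lambda>I. I \<subseteq> ground M1 \<union> ground M2 \<and> (\<forall>C \<in> series_circuits M1 M2 p. \<not> C \<subseteq> I))"

definition matroid_iso :: "('a \<Rightarrow> 'b) \<Rightarrow> 'a matroid \<Rightarrow> 'b matroid \<Rightarrow> bool" where
  "matroid_iso f M N \<longleftrightarrow> bij_betw f (ground M) (ground N) \<and>
     (\<forall>I \<subseteq> ground M. indep M I \<longleftrightarrow> indep N (f ` I))"

end

theory Submission
  imports Defs
begin

text \<open>Skewness gives r(D1 \<union> D2) = |D1| + |D2| - 2. This forces D1 and D2 to be disjoint and
  makes every subset of D1 \<union> D2 that contains neither circuit independent, while connectivity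
  puts e in the closure of D1 \<union> D2. So the only question is which independent I \<subseteq> D1 \<union> D2
  stay independent when e is added. If some such I with I + e dependent misses two elements x, y
  of D1 or of D2, then every basis meets {x, y} although each of x, y is avoided by some basis, so
  {x, y} is a cocircuit. Otherwise I + e is independent whenever I misses two elements of D1 or
  of D2, and this is exactly the independence rule of the series connection of
  U(|D1| - 1, |D1| + 1) and U(|D2| - 1, |D2| + 1) at e.\<close>

locale matroid =
  fixes M :: "'a matroid"
  assumes is_matroid: "is_matroid M"
begin

lemma finite_ground: "finite (ground M)"
  using is_matroid unfolding is_matroid_def by blast

lemma indep_empty: "indep M {}"
  using is_matroid unfolding is_matroid_def by blast

lemma indep_subset: "indep M J \<Longrightarrow> I \<subseteq> J \<Longrightarrow> indep M I"
  using is_matroid unfolding is_matroid_def by blast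

lemma indep_augment:
  "indep M I \<Longrightarrow> indep M J \<Longrightarrow> card I < card J \<Longrightarrow> \<exists>x \<in> J - I. indep M (insert x I)"
  using is_matroid unfolding is_matroid_def by blast

lemma indep_subset_ground: "indep M I \<Longrightarrow> I \<subseteq> ground M"
  unfolding indep_def by blast

lemma finite_indep: "indep M I \<Longrightarrow> finite I"
  using indep_subset_ground finite_ground finite_subset by blast

lemma circuit_subset_ground: "circuit M C \<Longrightarrow> C \<subseteq> ground M"
  unfolding circuit_def by blast

lemma finite_circuit: "circuit M C \<Longrightarrow> finite C"
  using circuit_subset_ground finite_ground finite_subset by blast

lemma circuit_minus_indep: "circuit M C \<Longrightarrow> x \<in> C \<Longrightarrow> indep M (C - {x})"
  unfolding circuit_def by blast

lemma circuit_subset_dep: "circuit M C \<Longrightarrow> C \<subseteq> X \<Longrightarrow> \<not> indep M X"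
  unfolding circuit_def using indep_subset by blast

lemma circuit_nonempty: "circuit M C \<Longrightarrow> C \<noteq> {}"
  using circuit_subset_dep indep_empty by blast

lemma circuits_incomparable:
  assumes "circuit M C" "circuit M C'" "C \<subseteq> C'"
  shows "C = C'"
proof (rule ccontr)
  assume "C \<noteq> C'"
  then obtain x where "x \<in> C'" "C \<subseteq> C' - {x}"
    using assms(3) by blast
  then show False
    using assms(1,2) circuit_minus_indep circuit_subset_dep by blast
qed

lemma indep_extend_max_card:
  assumes "indep M J" "J \<subseteq> K"
  obtains I where "indep M I" "J \<subseteq> I" "I \<subseteq> K"
    "\<And>I'. indep M I' \<Longrightarrow> I' \<subseteq> K \<Longrightarrow> card I' \<le> card I"
proof -
  let ?P = "\<lambda>I. indep M I \<and> J \<subseteq> I \<and> I \<subseteq> K"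
  have bounded: "card I < Suc (card (ground M))" if "?P I" for I
    using that indep_subset_ground finite_ground by (meson card_mono le_imp_less_Suc)
  have "\<exists>I. ?P I \<and> (\<forall>I'. ?P I' \<longrightarrow> card I' \<le> card I)"
    by (rule ex_has_greatest_nat[of ?P J card "Suc (card (ground M))"]) (use assms bounded in blast)+
  then obtain I where I: "?P I" and greatest: "\<And>I'. ?P I' \<Longrightarrow> card I' \<le> card I"
    by blast
  have "card I' \<le> card I" if I': "indep M I'" "I' \<subseteq> K" for I'
  proof (rule ccontr)
    assume "\<not> card I' \<le> card I"
    then obtain x where x: "x \<in> I' - I" "indep M (insert x I)"
      using indep_augment I I' by fastforce
    then have "card (insert x I) \<le> card I"
      using greatest I I' by blast
    then show False
      using x finite_indep I by simp
  qed
  then show thesis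
    using that I by blast
qed

lemma basis_card_ge: "basis M B \<Longrightarrow> indep M J \<Longrightarrow> card J \<le> card B"
proof (rule ccontr)
  assume B: "basis M B" and J: "indep M J" and "\<not> card J \<le> card B"
  then obtain x where "x \<in> J - B" "indep M (insert x B)"
    using indep_augment unfolding basis_def by (meson not_le)
  then show False
    using B J indep_subset_ground unfolding basis_def by blast
qed

lemma basis_if_max_card:
  assumes "indep M B" "\<And>J. indep M J \<Longrightarrow> card J \<le> card B"
  shows "basis M B"
  unfolding basis_def
proof (intro conjI ballI notI assms(1))
  fix x assume "x \<in> ground M - B" "indep M (insert x B)"
  then show False
    using assms(2)[of "insert x B"] finite_indep[OF assms(1)] by simp
qed

lemma rank_ge: "indep M I \<Longrightarrow> I \<subseteq> X \<Longrightarrow> card I \<le> rank M X"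
  unfolding rank_def
  by (rule Max_ge, rule finite_imageI, rule finite_subset[of _ "Pow (ground M)"])
    (use indep_subset_ground finite_ground in auto)

lemma rank_attained:
  obtains I where "indep M I" "I \<subseteq> X" "card I = rank M X"
proof -
  have "finite {I. I \<subseteq> X \<and> indep M I}"
    by (rule finite_subset[of _ "Pow (ground M)"]) (use indep_subset_ground finite_ground in auto)
  then have "rank M X \<in> card ` {I. I \<subseteq> X \<and> indep M I}"
    unfolding rank_def using indep_empty by (intro Max_in) auto
  then show thesis
    using that by auto
qed

lemma indep_extend_to_rank:
  assumes "indep M J" "J \<subseteq> X"
  obtains I where "indep M I" "J \<subseteq> I" "I \<subseteq> X" "card I = rank M X"
proof -
  obtain I where I: "indep M I" "J \<subseteq> I" "I \<subseteq> X"
    and greatest: "\<And>I'. indep M I' \<Longrightarrow> I' \<subseteq> X \<Longrightarrow> card I' \<le> card I"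
    using indep_extend_max_card[OF assms] by blast
  obtain T where T: "indep M T" "T \<subseteq> X" "card T = rank M X"
    using rank_attained by blast
  then have "card I = rank M X"
    using greatest[OF T(1,2)] T(3) rank_ge[OF I(1,3)] by simp
  then show thesis
    using that I by blast
qed

lemma rank_circuit: "circuit M C \<Longrightarrow> rank M C = card C - 1"
proof -
  assume C: "circuit M C"
  obtain I where I: "indep M I" "I \<subseteq> C" "card I = rank M C"
    using rank_attained by blast
  then have "card I < card C"
    using C circuit_subset_dep finite_circuit psubset_card_mono by blast
  moreover obtain x where "x \<in> C"
    using C circuit_nonempty by blast
  then have "card C - 1 \<le> rank M C"
    using C rank_ge[of "C - {x}" C] circuit_minus_indep finite_circuit by simp
  ultimately show ?thesis
    using I by linarith
qed

lemma notin_indep_if_circuit_minus_subset: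
  "circuit M C \<Longrightarrow> C - {x} \<subseteq> I \<Longrightarrow> indep M I \<Longrightarrow> x \<notin> I"
  using circuit_subset_dep by blast

lemma connected_circuit_card_ge_2:
  assumes "connected_matroid M" "circuit M C" "e \<in> ground M" "e \<notin> C"
  shows "2 \<le> card C"
proof (rule ccontr)
  assume "\<not> 2 \<le> card C"
  moreover have "card C \<noteq> 0"
    using assms(2) circuit_nonempty finite_circuit by simp
  ultimately obtain u where u: "C = {u}"
    by (metis One_nat_def card_1_singletonE less_2_cases not_le)
  then obtain C' where "circuit M C'" "u \<in> C'" "e \<in> C'"
    using assms circuit_subset_ground unfolding connected_matroid_def by blast
  moreover have "C \<subseteq> C' - {e}"
    using u assms(4) calculation(2) by blast
  ultimately show False
    using assms(2) circuit_minus_indep circuit_subset_dep by blast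
qed

end

lemma indep_dual_iff: "indep (dual M) X \<longleftrightarrow> X \<subseteq> ground M \<and> (\<exists>B. basis M B \<and> X \<inter> B = {})"
  unfolding indep_def dual_def ground_def by auto

lemma cocircuit_pairI:
  assumes "x \<in> ground M" "y \<in> ground M"
    and "\<And>B. basis M B \<Longrightarrow> x \<in> B \<or> y \<in> B"
    and "\<exists>B. basis M B \<and> x \<notin> B" "\<exists>B. basis M B \<and> y \<notin> B"
  shows "cocircuit M {x, y}"
  unfolding cocircuit_def circuit_def
proof (intro conjI ballI)
  show "{x, y} \<subseteq> ground (dual M)"
    using assms(1,2) unfolding dual_def ground_def by simp
  show "\<not> indep (dual M) {x, y}"
    unfolding indep_dual_iff using assms(3) by blast
  fix z assume "z \<in> {x, y}"
  then have "{x, y} - {z} \<subseteq> {y} \<or> {x, y} - {z} \<subseteq> {x}"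
    by blast
  then show "indep (dual M) ({x, y} - {z})"
    unfolding indep_dual_iff using assms(1,2,4,5) by blast
qed

lemma ground_uniform: "ground (uniform r E) = E"
  unfolding uniform_def ground_def by simp

lemma indep_uniform: "indep (uniform r E) X \<longleftrightarrow> X \<subseteq> E \<and> card X \<le> r"
  unfolding indep_def uniform_def ground_def by auto

lemma circuit_uniform:
  assumes "finite E"
  shows "circuit (uniform r E) C \<longleftrightarrow> C \<subseteq> E \<and> card C = Suc r"
proof
  assume C: "circuit (uniform r E) C"
  then have "C \<subseteq> E" "\<not> card C \<le> r" "\<forall>x \<in> C. card (C - {x}) \<le> r"
    unfolding circuit_def ground_uniform indep_uniform by auto
  moreover have "finite C"
    using \<open>C \<subseteq> E\<close> assms finite_subset by blast
  moreover obtain x where "x \<in> C"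
    using calculation(2) by fastforce
  ultimately have "C \<subseteq> E" "card C - 1 \<le> r" "\<not> card C \<le> r"
    by auto
  then show "C \<subseteq> E \<and> card C = Suc r"
    by linarith
next
  assume C: "C \<subseteq> E \<and> card C = Suc r"
  then have "finite C"
    using assms finite_subset by blast
  then have "card (C - {x}) \<le> r" if "x \<in> C" for x
    using that C by simp
  moreover have "\<not> card C \<le> r"
    using C by simp
  ultimately
  show "circuit (uniform r E) C"
    unfolding circuit_def ground_uniform indep_uniform using C by blast
qed

lemma uniform_circuit_avoiding_subset_iff:
  assumes "finite E" "p \<in> E" "card E = r + 2"
  shows "(\<exists>C. circuit (uniform r E) C \<and> p \<notin> C \<and> C \<subseteq> X) \<longleftrightarrow> E - {p} \<subseteq> X"
proof
  assume "\<exists>C. circuit (uniform r E) C \<and> p \<notin> C \<and> C \<subseteq> X"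
  then obtain C where C: "C \<subseteq> E - {p}" "card C = Suc r" "C \<subseteq> X"
    using circuit_uniform[OF assms(1)] by blast
  moreover have "card (E - {p}) = Suc r"
    using assms by simp
  ultimately have "C = E - {p}"
    using card_subset_eq assms(1) by (metis finite_Diff)
  then show "E - {p} \<subseteq> X"
    using C(3) by simp
next
  assume "E - {p} \<subseteq> X"
  moreover have "circuit (uniform r E) (E - {p})"
    using circuit_uniform[OF assms(1)] assms by simp
  ultimately show "\<exists>C. circuit (uniform r E) C \<and> p \<notin> C \<and> C \<subseteq> X"
    by blast
qed

lemma uniform_circuit_through_subset_iff:
  assumes "finite E" "p \<in> E"
  shows "(\<exists>C. circuit (uniform r E) C \<and> p \<in> C \<and> C \<subseteq> X) \<longleftrightarrow> p \<in> X \<and> r \<le> card (X \<inter> (E - {p}))"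
proof
  assume "\<exists>C. circuit (uniform r E) C \<and> p \<in> C \<and> C \<subseteq> X"
  then obtain C where C: "C \<subseteq> E" "card C = Suc r" "p \<in> C" "C \<subseteq> X"
    using circuit_uniform[OF assms(1)] by blast
  then have "C - {p} \<subseteq> X \<inter> (E - {p})" "card (C - {p}) = r"
    by auto
  then show "p \<in> X \<and> r \<le> card (X \<inter> (E - {p}))"
    using C(3,4) assms(1) card_mono by (metis finite_Diff finite_Int subsetD)
next
  assume "p \<in> X \<and> r \<le> card (X \<inter> (E - {p}))"
  then obtain S where S: "S \<subseteq> X \<inter> (E - {p})" "card S = r"
    by (meson obtain_subset_with_card_n)
  then have "finite S" "p \<notin> S"
    using assms(1) finite_subset by blast+
  then have "circuit (uniform r E) (insert p S)"
    using circuit_uniform[OF assms(1)] S assms(2) by auto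
  then show "\<exists>C. circuit (uniform r E) C \<and> p \<in> C \<and> C \<subseteq> X"
    using S \<open>p \<in> X \<and> _\<close> by blast
qed

lemma ground_series: "ground (series M1 M2 p) = ground M1 \<union> ground M2"
  unfolding series_def ground_def by simp

lemma bex_pairwise_Un_subset_iff:
  "(\<exists>C \<in> {C1 \<union> C2 | C1 C2. P C1 \<and> Q C2}. C \<subseteq> X) \<longleftrightarrow>
     (\<exists>C1. P C1 \<and> C1 \<subseteq> X) \<and> (\<exists>C2. Q C2 \<and> C2 \<subseteq> X)"
proof
  assume "(\<exists>C1. P C1 \<and> C1 \<subseteq> X) \<and> (\<exists>C2. Q C2 \<and> C2 \<subseteq> X)"
  then obtain C1 C2 where "P C1" "Q C2" "C1 \<union> C2 \<subseteq> X"
    by blast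
  then show "\<exists>C \<in> {C1 \<union> C2 | C1 C2. P C1 \<and> Q C2}. C \<subseteq> X"
    by blast
qed blast

lemma indep_series_iff:
  "indep (series M1 M2 p) X \<longleftrightarrow> X \<subseteq> ground M1 \<union> ground M2 \<and>
     \<not> (\<exists>C. circuit M1 C \<and> p \<notin> C \<and> C \<subseteq> X) \<and> \<not> (\<exists>C. circuit M2 C \<and> p \<notin> C \<and> C \<subseteq> X) \<and>
     \<not> ((\<exists>C. circuit M1 C \<and> p \<in> C \<and> C \<subseteq> X) \<and> (\<exists>C. circuit M2 C \<and> p \<in> C \<and> C \<subseteq> X))"
proof -
  have "indep (series M1 M2 p) X \<longleftrightarrow>
      X \<subseteq> ground M1 \<union> ground M2 \<and> \<not> (\<exists>C \<in> series_circuits M1 M2 p. C \<subseteq> X)"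
    by (simp add: indep_def series_def ground_def)
  moreover have "(\<exists>C \<in> {C. circuit M C \<and> p \<notin> C}. C \<subseteq> X) \<longleftrightarrow> (\<exists>C. circuit M C \<and> p \<notin> C \<and> C \<subseteq> X)"
    for M :: "'a matroid"
    by blast
  moreover have "(\<exists>C \<in> {C1 \<union> C2 | C1 C2. circuit M1 C1 \<and> p \<in> C1 \<and> circuit M2 C2 \<and> p \<in> C2}. C \<subseteq> X) \<longleftrightarrow>
      (\<exists>C. circuit M1 C \<and> p \<in> C \<and> C \<subseteq> X) \<and> (\<exists>C. circuit M2 C \<and> p \<in> C \<and> C \<subseteq> X)"
    using bex_pairwise_Un_subset_iff[of "\<lambda>C. circuit M1 C \<and> p \<in> C" "\<lambda>C. circuit M2 C \<and> p \<in> C" X]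
    by simp
  ultimately show ?thesis
    unfolding series_circuits_def bex_Un by presburger
qed

lemma indep_series_uniform_iff:
  assumes "finite E1" "finite E2" "p \<in> E1" "p \<in> E2" "card E1 = r1 + 2" "card E2 = r2 + 2"
  shows "indep (series (uniform r1 E1) (uniform r2 E2) p) X \<longleftrightarrow>
    X \<subseteq> E1 \<union> E2 \<and> \<not> E1 - {p} \<subseteq> X \<and> \<not> E2 - {p} \<subseteq> X \<and>
    \<not> (p \<in> X \<and> r1 \<le> card (X \<inter> (E1 - {p})) \<and> r2 \<le> card (X \<inter> (E2 - {p})))"
  unfolding indep_series_iff ground_uniform
    uniform_circuit_avoiding_subset_iff[OF assms(1,3,5)] uniform_circuit_avoiding_subset_iff[OF assms(2,4,6)]
    uniform_circuit_through_subset_iff[OF assms(1,3)] uniform_circuit_through_subset_iff[OF assms(2,4)]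
  by argo

lemma inj_on_image_subset_iff:
  "inj_on f G \<Longrightarrow> A \<subseteq> G \<Longrightarrow> B \<subseteq> G \<Longrightarrow> f ` A \<subseteq> f ` B \<longleftrightarrow> A \<subseteq> B"
  unfolding inj_on_def by blast

locale two_skew_circuits = matroid +
  fixes D1 D2 :: "'a set" and e :: 'a
  assumes connected: "connected_matroid M"
    and ground_eq: "ground M = D1 \<union> D2 \<union> {e}"
    and e_notin: "e \<notin> D1 \<union> D2"
    and circuit_D1: "circuit M D1" and circuit_D2: "circuit M D2"
    and skew_D1_D2: "skew M D1 D2"
begin

lemma swapped: "two_skew_circuits M D2 D1 e"
proof unfold_locales
  show "ground M = D2 \<union> D1 \<union> {e}"
    using ground_eq by blast
  show "e \<notin> D2 \<union> D1"
    using e_notin by blast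
  show "skew M D2 D1"
    using skew_D1_D2 unfolding skew_def by (simp add: Un_commute)
qed (fact is_matroid connected circuit_D1 circuit_D2)+

lemma finite_D1: "finite D1"
  using finite_circuit circuit_D1 .

lemma finite_D2: "finite D2"
  using finite_circuit circuit_D2 .

lemma card_D1_ge_2: "2 \<le> card D1"
  using connected_circuit_card_ge_2[OF connected circuit_D1] ground_eq e_notin by blast

lemma card_D2_ge_2: "2 \<le> card D2"
  using connected_circuit_card_ge_2[OF connected circuit_D2] ground_eq e_notin by blast

lemma rank_D1_D2: "rank M (D1 \<union> D2) = card D1 + card D2 - 2"
  using skew_D1_D2 rank_circuit[OF circuit_D1] rank_circuit[OF circuit_D2] card_D1_ge_2 card_D2_ge_2
  unfolding skew_def by linarith

lemma D1_D2_disjoint: "D1 \<inter> D2 = {}"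
proof -
  have "D1 \<noteq> D2"
    using rank_D1_D2 rank_circuit[OF circuit_D1] card_D1_ge_2 by auto
  then obtain v where v: "v \<in> D2" "v \<notin> D1"
    using circuits_incomparable[OF circuit_D2 circuit_D1] by blast
  obtain I where I: "indep M I" "D2 - {v} \<subseteq> I" "I \<subseteq> D1 \<union> D2" "card I = card D1 + card D2 - 2"
    using indep_extend_to_rank[OF circuit_minus_indep[OF circuit_D2 v(1)], of "D1 \<union> D2"] rank_D1_D2
    by auto
  have "v \<notin> I"
    using notin_indep_if_circuit_minus_subset[OF circuit_D2 I(2,1)] .
  obtain z where z: "z \<in> D1" "z \<notin> I"
    using circuit_subset_dep[OF circuit_D1] I(1) by blast
  have "I \<subseteq> (D1 \<union> D2) - {v, z}"
    using I(3) z(2) \<open>v \<notin> I\<close> by blast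
  then have "card I \<le> card ((D1 \<union> D2) - {v, z})"
    using finite_D1 finite_D2 by (intro card_mono) auto
  also have "\<dots> = card (D1 \<union> D2) - 2"
  proof -
    have "v \<noteq> z"
      using v z by blast
    then have "card {v, z} = 2"
      by simp
    then show ?thesis
      using v z finite_D1 finite_D2 by (subst card_Diff_subset) auto
  qed
  finally have "card (D1 \<inter> D2) = 0"
    using I(4) card_Un_Int[OF finite_D1 finite_D2] card_D1_ge_2 card_D2_ge_2 by arith
  then show ?thesis
    using finite_D1 by simp
qed

lemma card_delete_one_each:
  assumes "z \<in> D1" "w \<in> D2"
  shows "card ((D1 - {z}) \<union> (D2 - {w})) = card D1 + card D2 - 2"
proof -
  have "card ((D1 - {z}) \<union> (D2 - {w})) = card (D1 - {z}) + card (D2 - {w})"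
    using D1_D2_disjoint finite_D1 finite_D2 by (intro card_Un_disjoint) auto
  then show ?thesis
    using assms finite_D1 finite_D2 card_D1_ge_2 card_D2_ge_2 by simp
qed

lemma indep_delete_one_each_some:
  assumes z: "z \<in> D1"
  shows "\<exists>w \<in> D2. indep M ((D1 - {z}) \<union> (D2 - {w}))"
proof -
  obtain I where I: "indep M I" "D1 - {z} \<subseteq> I" "I \<subseteq> D1 \<union> D2" "card I = card D1 + card D2 - 2"
    using indep_extend_to_rank[OF circuit_minus_indep[OF circuit_D1 z], of "D1 \<union> D2"] rank_D1_D2
    by auto
  have "z \<notin> I"
    using notin_indep_if_circuit_minus_subset[OF circuit_D1 I(2,1)] .
  obtain w where w: "w \<in> D2" "w \<notin> I"
    using circuit_subset_dep[OF circuit_D2] I(1) by blast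
  have "I \<subseteq> (D1 - {z}) \<union> (D2 - {w})"
    using I(3) w(2) \<open>z \<notin> I\<close> by blast
  then have "I = (D1 - {z}) \<union> (D2 - {w})"
    using card_subset_eq finite_D1 finite_D2 I(4) card_delete_one_each[OF z w(1)]
    by (metis finite_Diff finite_UnI)
  then show ?thesis
    using I(1) w(1) by blast
qed

text \<open>The previous lemma gives w' with (D1 - {z}) \<union> (D2 - {w'}) independent and, with the roles
  of D1 and D2 swapped, z' with (D2 - {w}) \<union> (D1 - {z'}) independent. If w' \<noteq> w, augmenting
  (D1 - {z}) \<union> (D2 - {w, w'}) from the latter cannot add z, which would complete D1, so it adds w'.\<close>
lemma indep_delete_one_each:
  assumes z: "z \<in> D1" and w: "w \<in> D2"
  shows "indep M ((D1 - {z}) \<union> (D2 - {w}))"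
proof -
  interpret swap: two_skew_circuits M D2 D1 e
    by (rule swapped)
  obtain w' where w': "w' \<in> D2" "indep M ((D1 - {z}) \<union> (D2 - {w'}))"
    using indep_delete_one_each_some[OF z] by blast
  obtain z' where z': "z' \<in> D1" "indep M ((D2 - {w}) \<union> (D1 - {z'}))"
    using swap.indep_delete_one_each_some[OF w] by blast
  show ?thesis
  proof (cases "w = w'")
    case True
    then show ?thesis
      using w' by simp
  next
    case False
    let ?L = "(D1 - {z}) \<union> (D2 - {w, w'})"
    have L_indep: "indep M ?L"
      by (rule indep_subset[OF w'(2)]) blast
    have "card ?L = card (D1 - {z}) + card (D2 - {w, w'})"
      using D1_D2_disjoint finite_D1 finite_D2 by (intro card_Un_disjoint) auto
    also have "\<dots> = card D1 + card D2 - 3"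
      using z w w' False finite_D1 finite_D2 card_D1_ge_2 card_D2_ge_2 by (subst card_Diff_subset) auto
    also have "\<dots> < card ((D2 - {w}) \<union> (D1 - {z'}))"
      using card_delete_one_each[OF z'(1) w] card_D1_ge_2 card_D2_ge_2 by (simp add: Un_commute)
    finally obtain u where u: "u \<in> (D2 - {w}) \<union> (D1 - {z'}) - ?L" "indep M (insert u ?L)"
      using indep_augment[OF L_indep z'(2)] by blast
    show ?thesis
    proof (cases "u \<in> D1")
      case True
      then have "u = z"
        using u(1) by blast
      then show ?thesis
        using notin_indep_if_circuit_minus_subset[OF circuit_D1 _ u(2)] by blast
    next
      case False
      then have "insert u ?L = (D1 - {z}) \<union> (D2 - {w})"
        using u(1) w' \<open>w \<noteq> w'\<close> by blast
      then show ?thesis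
        using u(2) by simp
    qed
  qed
qed

lemma insert_delete_one_each_dep:
  assumes "z \<in> D1" "w \<in> D2" "u \<in> D1 \<union> D2" "u \<notin> (D1 - {z}) \<union> (D2 - {w})"
  shows "\<not> indep M (insert u ((D1 - {z}) \<union> (D2 - {w})))"
proof -
  have "D1 \<subseteq> insert u ((D1 - {z}) \<union> (D2 - {w})) \<or> D2 \<subseteq> insert u ((D1 - {z}) \<union> (D2 - {w}))"
    using assms by blast
  then show ?thesis
    using circuit_subset_dep[OF circuit_D1] circuit_subset_dep[OF circuit_D2] by blast
qed

lemma indep_if_contains_neither:
  assumes "J \<subseteq> D1 \<union> D2" "\<not> D1 \<subseteq> J" "\<not> D2 \<subseteq> J"
  shows "indep M J"
proof -
  obtain z w where "z \<in> D1" "z \<notin> J" "w \<in> D2" "w \<notin> J"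
    using assms(2,3) by blast
  then show ?thesis
    using indep_delete_one_each indep_subset assms(1) by blast
qed

text \<open>A circuit through e misses some z \<in> D1 and w \<in> D2, so e is spanned by
  (D1 - {z}) \<union> (D2 - {w}) and r(M) = r(D1 \<union> D2).\<close>
lemma indep_card_le:
  assumes J: "indep M J"
  shows "card J \<le> card D1 + card D2 - 2"
proof (rule ccontr)
  assume too_big: "\<not> ?thesis"
  obtain d where "d \<in> D1"
    using circuit_nonempty[OF circuit_D1] by blast
  then have "d \<in> ground M" "e \<in> ground M" "d \<noteq> e"
    using ground_eq e_notin by auto
  then obtain C where C: "circuit M C" "e \<in> C"
    using connected unfolding connected_matroid_def by blast
  have C_indep: "indep M (C - {e})"
    using circuit_minus_indep[OF C] .
  obtain z where z: "z \<in> D1" "z \<notin> C - {e}"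
    using circuit_subset_dep[OF circuit_D1, of "C - {e}"] C_indep by blast
  obtain w where w: "w \<in> D2" "w \<notin> C - {e}"
    using circuit_subset_dep[OF circuit_D2, of "C - {e}"] C_indep by blast
  let ?L = "(D1 - {z}) \<union> (D2 - {w})"
  have "card ?L < card J"
    using card_delete_one_each[OF z(1) w(1)] too_big by simp
  then obtain u where u: "u \<in> J - ?L" "indep M (insert u ?L)"
    using indep_augment[OF indep_delete_one_each[OF z(1) w(1)] J] by blast
  have "u \<notin> D1 \<union> D2"
    using insert_delete_one_each_dep[OF z(1) w(1)] u by blast
  moreover have "C \<subseteq> insert e ?L"
    using circuit_subset_ground[OF C(1)] ground_eq z w by blast
  then have "u \<noteq> e"
    using circuit_subset_dep[OF C(1)] u(2) by blast
  ultimately show False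
    using u(1) indep_subset_ground[OF J] ground_eq by blast
qed

definition misses_two :: "'a set \<Rightarrow> bool" where
  "misses_two J \<longleftrightarrow> card (J \<inter> D1) < card D1 - 1 \<or> card (J \<inter> D2) < card D2 - 1"

lemma indep_with_e_misses_two:
  assumes J: "indep M J" "e \<in> J"
  shows "misses_two J"
proof -
  have "card (insert e ((J \<inter> D1) \<union> (J \<inter> D2))) = Suc (card (J \<inter> D1) + card (J \<inter> D2))"
    using D1_D2_disjoint e_notin finite_D1 finite_D2 by (subst card_Un_disjoint[symmetric]) auto
  moreover have "card (insert e ((J \<inter> D1) \<union> (J \<inter> D2))) \<le> card J"
    using J finite_indep by (intro card_mono) auto
  ultimately show ?thesis
    unfolding misses_two_def using indep_card_le[OF J(1)] card_D1_ge_2 card_D2_ge_2 by linarith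
qed

lemma basis_avoiding:
  assumes v: "v \<in> D2"
  shows "\<exists>B. basis M B \<and> v \<notin> B"
proof -
  obtain z where z: "z \<in> D1"
    using circuit_nonempty[OF circuit_D1] by blast
  have "basis M ((D1 - {z}) \<union> (D2 - {v}))"
    using indep_delete_one_each[OF z v] indep_card_le card_delete_one_each[OF z v]
    by (intro basis_if_max_card) auto
  moreover have "v \<notin> (D1 - {z}) \<union> (D2 - {v})"
    using v D1_D2_disjoint by blast
  ultimately show ?thesis
    by blast
qed

text \<open>A basis avoiding x and y is larger than any independent subset of D1 \<union> (D2 - {x, y}).
  Augmenting a maximal one that contains I could then only add e, but I + e is dependent.\<close>
lemma basis_meets_pair:
  assumes I: "I \<subseteq> D1 \<union> D2" "indep M I" "\<not> indep M (insert e I)"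
    and xy: "x \<in> D2 - I" "y \<in> D2 - I" "x \<noteq> y"
    and B: "basis M B"
  shows "x \<in> B \<or> y \<in> B"
proof (rule ccontr)
  assume avoid: "\<not> (x \<in> B \<or> y \<in> B)"
  let ?K = "D1 \<union> (D2 - {x, y})"
  obtain I' where I': "indep M I'" "I \<subseteq> I'" "I' \<subseteq> ?K"
    and max: "\<And>J. indep M J \<Longrightarrow> J \<subseteq> ?K \<Longrightarrow> card J \<le> card I'"
    using indep_extend_max_card[OF I(2), of ?K] I(1) xy by blast
  obtain z where z: "z \<in> D1" "z \<notin> I'"
    using circuit_subset_dep[OF circuit_D1] I'(1) by blast
  have "card (D2 - {x, y}) = card D2 - 2"
    using xy finite_D2 by (subst card_Diff_subset) auto
  then have card_K: "card ?K = card D1 + card D2 - 2"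
    using finite_D1 finite_D2 D1_D2_disjoint card_D2_ge_2 by (subst card_Un_disjoint) auto
  have "card I' \<le> card (?K - {z})"
    using I'(3) z finite_D1 finite_D2 by (intro card_mono) auto
  also have "\<dots> = card D1 + card D2 - 3"
    using z finite_D1 finite_D2 card_K by simp
  also have "\<dots> < card B"
    using basis_card_ge[OF B indep_delete_one_each[OF z(1), of x]] card_delete_one_each[OF z(1), of x]
      xy card_D1_ge_2 card_D2_ge_2 by simp
  finally obtain u where u: "u \<in> B - I'" "indep M (insert u I')"
    using indep_augment[OF I'(1)] B unfolding basis_def by blast
  have "u \<noteq> e"
    using u(2) I(3) I'(2) indep_subset by blast
  moreover have "u \<in> ground M"
    using u(1) B indep_subset_ground unfolding basis_def by blast
  ultimately have "u \<in> ?K"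
    using u(1) avoid ground_eq by blast
  then have "card (insert u I') \<le> card I'"
    using max u(2) I'(3) by blast
  then show False
    using u(1) finite_indep[OF I'(1)] by simp
qed

lemma two_cocircuit_avoiding_e:
  assumes I: "I \<subseteq> D1 \<union> D2" "indep M I" "\<not> indep M (insert e I)"
    and deficient: "card (I \<inter> D2) < card D2 - 1"
  shows "\<exists>C. cocircuit M C \<and> card C = 2 \<and> e \<notin> C"
proof -
  have "card (D2 - I) = card D2 - card (D2 \<inter> I)"
    using finite_D2 by (intro card_Diff_subset_Int) simp
  then have "card (D2 - I) = card D2 - card (I \<inter> D2)"
    by (simp add: Int_commute)
  then have "2 \<le> card (D2 - I)"
    using deficient by linarith
  then obtain S where S: "S \<subseteq> D2 - I" "card S = 2"
    by (meson obtain_subset_with_card_n)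
  then obtain x y where xy: "S = {x, y}" "x \<noteq> y"
    by (meson card_2_iff)
  have "cocircuit M {x, y}"
  proof (rule cocircuit_pairI)
    show "x \<in> ground M" "y \<in> ground M"
      using S xy ground_eq by auto
    show "x \<in> B \<or> y \<in> B" if "basis M B" for B
      using basis_meets_pair[OF I _ _ xy(2) that] S xy(1) by blast
    show "\<exists>B. basis M B \<and> x \<notin> B" "\<exists>B. basis M B \<and> y \<notin> B"
      using basis_avoiding S xy(1) by auto
  qed
  moreover have "e \<notin> {x, y}"
    using S xy(1) e_notin by blast
  ultimately show ?thesis
    using S xy by blast
qed

lemma indep_iff_no_series_circuit:
  assumes extends: "\<forall>J. J \<subseteq> D1 \<union> D2 \<longrightarrow> indep M J \<longrightarrow> misses_two J \<longrightarrow> indep M (insert e J)"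
    and I: "I \<subseteq> ground M"
  shows "indep M I \<longleftrightarrow> \<not> D1 \<subseteq> I \<and> \<not> D2 \<subseteq> I \<and> (e \<in> I \<longrightarrow> misses_two I)"
proof
  assume "indep M I"
  then show "\<not> D1 \<subseteq> I \<and> \<not> D2 \<subseteq> I \<and> (e \<in> I \<longrightarrow> misses_two I)"
    using circuit_subset_dep[OF circuit_D1] circuit_subset_dep[OF circuit_D2] indep_with_e_misses_two
    by blast
next
  assume no_circuit: "\<not> D1 \<subseteq> I \<and> \<not> D2 \<subseteq> I \<and> (e \<in> I \<longrightarrow> misses_two I)"
  have sub: "I - {e} \<subseteq> D1 \<union> D2"
    using I ground_eq by blast
  have indep_minus_e: "indep M (I - {e})"
    using indep_if_contains_neither[OF sub] no_circuit by blast
  show "indep M I"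
  proof (cases "e \<in> I")
    case False
    then show ?thesis
      using indep_minus_e by simp
  next
    case True
    have "(I - {e}) \<inter> D1 = I \<inter> D1" "(I - {e}) \<inter> D2 = I \<inter> D2"
      using e_notin by blast+
    then have "misses_two (I - {e})"
      using no_circuit True unfolding misses_two_def by simp
    then have "indep M (insert e (I - {e}))"
      using extends sub indep_minus_e by blast
    then show ?thesis
      using True by (simp add: insert_absorb)
  qed
qed

lemma card_image_insert_e:
  assumes inj: "inj_on f (ground M)"
  shows "card (f ` insert e D1) = card D1 + 1" "card (f ` insert e D2) = card D2 + 1"
proof -
  have "inj_on f (insert e D1)" "inj_on f (insert e D2)"
    using inj_on_subset[OF inj] ground_eq by auto
  then show "card (f ` insert e D1) = card D1 + 1" "card (f ` insert e D2) = card D2 + 1"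
    using card_image e_notin finite_D1 finite_D2 by (metis card_insert_disjoint Suc_eq_plus1 UnCI)+
qed

lemma indep_series_uniform_image_iff:
  assumes inj: "inj_on f (ground M)" and I: "I \<subseteq> ground M"
  shows "indep (series (uniform (card D1 - 1) (f ` insert e D1)) (uniform (card D2 - 1) (f ` insert e D2))
      (f e)) (f ` I) \<longleftrightarrow> \<not> D1 \<subseteq> I \<and> \<not> D2 \<subseteq> I \<and> (e \<in> I \<longrightarrow> misses_two I)"
proof -
  have e_ground: "e \<in> ground M" and D1_ground: "D1 \<subseteq> ground M" and D2_ground: "D2 \<subseteq> ground M"
    using ground_eq by auto
  have fin_E: "finite (f ` insert e D1)" "finite (f ` insert e D2)"
    using finite_D1 finite_D2 by simp_all
  have p_E: "f e \<in> f ` insert e D1" "f e \<in> f ` insert e D2"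
    by simp_all
  have card_E: "card (f ` insert e D1) = card D1 - 1 + 2" "card (f ` insert e D2) = card D2 - 1 + 2"
    using card_image_insert_e[OF inj] card_D1_ge_2 card_D2_ge_2 by simp_all
  have "f e \<notin> f ` D1" "f e \<notin> f ` D2"
    using inj_on_image_mem_iff[OF inj e_ground] D1_ground D2_ground e_notin by blast+
  then have E_minus: "f ` insert e D1 - {f e} = f ` D1" "f ` insert e D2 - {f e} = f ` D2"
    by auto
  have card_Int: "card (f ` I \<inter> f ` D) = card (I \<inter> D)" if "D \<subseteq> ground M" for D
    using inj_on_image_Int[OF inj I that] inj_on_subset[OF inj] I
    by (metis card_image inf.coboundedI1)
  have "f ` I \<subseteq> f ` insert e D1 \<union> f ` insert e D2"
    using I ground_eq by auto
  then show ?thesis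
    unfolding indep_series_uniform_iff[OF fin_E p_E card_E]
      E_minus card_Int[OF D1_ground] card_Int[OF D2_ground] inj_on_image_mem_iff[OF inj e_ground I]
      inj_on_image_subset_iff[OF inj D1_ground I] inj_on_image_subset_iff[OF inj D2_ground I]
      misses_two_def
    by auto
qed

lemma series_uniform_iso:
  assumes extends: "\<forall>J. J \<subseteq> D1 \<union> D2 \<longrightarrow> indep M J \<longrightarrow> misses_two J \<longrightarrow> indep M (insert e J)"
  shows "\<exists>k l :: nat. k \<ge> 3 \<and> l \<ge> 3 \<and>
    (\<exists>(E1 :: nat set) E2 p f. finite E1 \<and> finite E2 \<and> card E1 = k \<and> card E2 = l \<and>
       E1 \<inter> E2 = {p} \<and>
       matroid_iso f M (series (uniform (k - 2) E1) (uniform (l - 2) E2) p) \<and>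
       f e = p)"
proof -
  obtain f :: "'a \<Rightarrow> nat" where inj: "inj_on f (ground M)"
    using finite_imp_inj_to_nat_seg[OF finite_ground] by blast
  define E1 E2 where "E1 = f ` insert e D1" and "E2 = f ` insert e D2"
  have fin: "finite E1" "finite E2"
    unfolding E1_def E2_def using finite_D1 finite_D2 by auto
  have card_E: "card E1 = card D1 + 1" "card E2 = card D2 + 1"
    unfolding E1_def E2_def using card_image_insert_e[OF inj] .
  have "E1 \<inter> E2 = f ` (insert e D1 \<inter> insert e D2)"
    unfolding E1_def E2_def by (rule inj_on_image_Int[OF inj, symmetric]) (use ground_eq in auto)
  then have E1_E2: "E1 \<inter> E2 = {f e}"
    using D1_D2_disjoint by auto
  let ?N = "series (uniform (card D1 - 1) E1) (uniform (card D2 - 1) E2) (f e)"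
  have "f ` ground M = ground ?N"
    unfolding ground_series ground_uniform E1_def E2_def ground_eq by auto
  then have "bij_betw f (ground M) (ground ?N)"
    unfolding bij_betw_def using inj by blast
  moreover have "indep M I \<longleftrightarrow> indep ?N (f ` I)" if "I \<subseteq> ground M" for I
    unfolding E1_def E2_def indep_series_uniform_image_iff[OF inj that]
    using indep_iff_no_series_circuit[OF extends that] .
  ultimately have "matroid_iso f M (series (uniform (card E1 - 2) E1) (uniform (card E2 - 2) E2) (f e))"
    unfolding matroid_iso_def card_E by simp
  moreover have "3 \<le> card E1" "3 \<le> card E2"
    using card_E card_D1_ge_2 card_D2_ge_2 by simp_all
  ultimately show ?thesis
    using fin E1_E2 by blast
qed

end

theorem lemma2p2:
  fixes M :: "'a matroid" and D1 D2 :: "'a set" and e :: 'a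
  assumes "is_matroid M"
    and "connected_matroid M"
    and "ground M = D1 \<union> D2 \<union> {e}"
    and "e \<notin> D1 \<union> D2"
    and "circuit M D1" and "circuit M D2"
    and "skew M D1 D2"
  shows "(\<exists>C. cocircuit M C \<and> card C = 2 \<and> e \<notin> C) \<or>
         (\<exists>k l :: nat. k \<ge> 3 \<and> l \<ge> 3 \<and>
            (\<exists>(E1 :: nat set) E2 p f. finite E1 \<and> finite E2 \<and> card E1 = k \<and> card E2 = l \<and>
               E1 \<inter> E2 = {p} \<and>
               matroid_iso f M (series (uniform (k - 2) E1) (uniform (l - 2) E2) p) \<and>
               f e = p))"
proof -
  interpret two_skew_circuits M D1 D2 e
    by unfold_locales (use assms in auto)
  interpret swap: two_skew_circuits M D2 D1 e
    by (rule swapped)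
  show ?thesis
  proof (cases "\<exists>J. J \<subseteq> D1 \<union> D2 \<and> indep M J \<and> \<not> indep M (insert e J) \<and> misses_two J")
    case True
    then obtain J where J: "J \<subseteq> D1 \<union> D2" "indep M J" "\<not> indep M (insert e J)"
      and "card (J \<inter> D1) < card D1 - 1 \<or> card (J \<inter> D2) < card D2 - 1"
      unfolding misses_two_def by blast
    then have "\<exists>C. cocircuit M C \<and> card C = 2 \<and> e \<notin> C"
      using two_cocircuit_avoiding_e[OF J] swap.two_cocircuit_avoiding_e[OF _ J(2,3)] J(1)
      by (metis Un_commute)
    then show ?thesis ..
  next
    case False
    then show ?thesis
      using series_uniform_iso by blast
  qed
qed

end
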